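(* Let $\Omega$ be a region of $\mathcal{C}^*_{n,A}$ ($n\ge1$), $\bm x\in\Omega$ with associated permutation $\pi$, and let $D_{1,\pi}(\Omega)$ be the Dyck path defined below. Then $\mathrm{level}(\Omega)=\ell(D_{1,\pi}(\Omega))$.
   Context: Let $A=\{a_1,\dots,a_m\}$ with $a_1>\dots>a_m>0$; $\mathcal{C}^*_{n,A}$ is the arrangement in $\mathbb{R}^n$ of hyperplanes $x_i-x_j=a_k$ ($i\ne j$, $1\le k\le m$); regions are connected components of the complement. The level of $X\subseteq\mathbb{R}^n$ is the smallest integer $\ell\ge0$ such that there are a linear subspace $W$ of dimension $\ell$ and $r>0$ with $X\subseteq\{\bm x:\min_{\bm y\in W}\|\bm x-\bm y\|\le r\}$. The associated permutation of $\bm x$ is the unique $\pi\in\mathfrak{S}_n$ with $x_{\pi(1)}\ge\dots\ge x_{\pi(n)}$ and $\pi^{-1}(i)<\pi^{-1}(j)$ whenever $i<j$ and $x_i=x_j$. Let $\alpha_i=\#\{j\in[n]:x_{\pi(i)}-x_{\pi(j)}>a_1\}$, so $\alpha_1\ge\dots\ge\alpha_n=0$ and $\alpha_i\le n-i$. $D_{1,\pi}(\Omega)$ is the lattice path from $(0,n)$ to $(n,0)$ with steps $E=(1,0)$, $S=(0,-1)$ given by $E^{n-\alpha_1}SE^{\alpha_1-\alpha_2}S\cdots E^{\alpha_{n-1}-\alpha_n}S$ (its steps labeled by $\pi$); it is a Dyck path. For a Dyck path $D$ from $(0,n)$ to $(n,0)$, $\ell(D)$ is the number of $k\in\{1,\dots,n\}$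 such that $D$ passes through $(k,n-k)$ (its number of prime components). *)

theory Defs
  imports "HOL-Analysis.Analysis"
begin

text \<open>Coordinates of R^n are indexed by a finite linearly ordered type 'n
  (the order plays the role of the order on indices 1..n); n = CARD('n).
  A is a finite nonempty set of positive reals; a_1 = Max A.\<close>

definition hyperplanes_CA :: "real set \<Rightarrow> (real^'n) set set" where
  "hyperplanes_CA A = {{x. x$i - x$j = a} | i j a. i \<noteq> j \<and> a \<in> A}"

definition regions_CA :: "real set \<Rightarrow> (real^'n) set set" where
  "regions_CA A = components (UNIV - \<Union>(hyperplanes_CA A))"

definition level :: "(real^'n) set \<Rightarrow> nat" where
  "level X = (LEAST l. \<exists>W r. subspace W \<and> dim W = l \<and> r > 0 \<and>
                          X \<subseteq> {x. infdist x W \<le> r})"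

definition is_assoc_perm :: "real^('n::{finite,linorder}) \<Rightarrow> (nat \<Rightarrow> 'n) \<Rightarrow> bool" where
  "is_assoc_perm x \<pi> \<longleftrightarrow> bij_betw \<pi> {1..CARD('n)} (UNIV::'n set) \<and>
     (\<forall>k\<in>{1..CARD('n)}. \<forall>l\<in>{1..CARD('n)}. k \<le> l \<longrightarrow> x$(\<pi> k) \<ge> x$(\<pi> l)) \<and>
     (\<forall>k\<in>{1..CARD('n)}. \<forall>l\<in>{1..CARD('n)}.
         \<pi> k < \<pi> l \<and> x$(\<pi> k) = x$(\<pi> l) \<longrightarrow> k < l)"

text \<open>alpha_i for i in 1..n, with the convention alpha_0 = n used in the first E-block.\<close>
definition alpha :: "real set \<Rightarrow> real^('n::finite) \<Rightarrow> (nat \<Rightarrow> 'n) \<Rightarrow> nat \<Rightarrow> nat" where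
  "alpha A x \<pi> i = (if i = 0 then CARD('n)
      else card {j\<in>{1..CARD('n)}. x$(\<pi> i) - x$(\<pi> j) > Max A})"

datatype step = E | S

definition dyck_word :: "nat \<Rightarrow> (nat \<Rightarrow> nat) \<Rightarrow> step list" where
  "dyck_word n \<alpha> = concat (map (\<lambda>i. replicate (\<alpha> (i - 1) - \<alpha> i) E @ [S]) [1..<n+1])"

fun move :: "int \<times> int \<Rightarrow> step \<Rightarrow> int \<times> int" where
  "move (a, b) E = (a + 1, b)"
| "move (a, b) S = (a, b - 1)"

fun path_points :: "int \<times> int \<Rightarrow> step list \<Rightarrow> (int \<times> int) list" where
  "path_points p [] = [p]"
| "path_points p (s # ss) = p # path_points (move p s) ss"

definition prime_components :: "nat \<Rightarrow> step list \<Rightarrow> nat" where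
  "prime_components n w = card {k\<in>{1..n}.
      (int k, int n - int k) \<in> set (path_points (0, int n) w)}"

definition D1 :: "real set \<Rightarrow> real^('n::finite) \<Rightarrow> (nat \<Rightarrow> 'n) \<Rightarrow> step list" where
  "D1 A x \<pi> = dyck_word CARD('n) (alpha A x \<pi>)"

end

theory Submission
  imports Defs
begin

text \<open>Sort the coordinates of \<open>x\<close> by \<open>\<pi>\<close> and call \<open>b\<close> a gap position if \<open>b = n\<close> or
  \<open>x(\<pi> b) - x(\<pi> (b + 1)) > a_1\<close>. At a gap position the top \<open>b\<close> coordinates can be raised
  together without ever meeting a hyperplane, so \<open>\<Omega>\<close> contains a ray in the direction of the
  indicator vector of these coordinates. These directions are linearly independent, and every
  subspace at bounded distance from \<open>\<Omega>\<close> must contain them. Conversely, in \<open>\<Omega>\<close> two consecutive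
  sorted coordinates not separated by a gap position stay less than \<open>a_1\<close> apart, as they do at
  \<open>x\<close>, so \<open>\<Omega>\<close> lies at bounded distance from the span of the indicator vectors. Hence the level
  is the number of gap positions. These are exactly the \<open>k\<close> with \<open>\<alpha>_k = n - k\<close>, i.e. the
  \<open>k\<close> for which \<open>D_{1,\<pi>}\<close> passes through \<open>(k, n - k)\<close>.\<close>

section \<open>Points visited by the lattice path\<close>

lemma start_in_path_points: "p \<in> set (path_points p w)"
  by (cases w) auto

lemma set_path_points_append:
  "set (path_points p (v @ w)) = set (path_points p v) \<union> set (path_points (foldl move p v) w)"
  by (induction v arbitrary: p) (auto simp: start_in_path_points)

lemma foldl_move_replicate_E: "foldl move (a, b) (replicate m E) = (a + int m, b)"
  by (induction m arbitrary: a) auto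

lemma set_path_points_replicate_E:
  "set (path_points (a, b) (replicate m E)) = {(X, b) | X. a \<le> X \<and> X \<le> a + int m}"
proof (induction m arbitrary: a)
  case (Suc m)
  have "set (path_points (a, b) (replicate (Suc m) E))
          = insert (a, b) {(X, b) | X. a + 1 \<le> X \<and> X \<le> a + 1 + int m}"
    using Suc by simp
  also have "\<dots> = {(X, b) | X. a \<le> X \<and> X \<le> a + int (Suc m)}"
    by auto
  finally show ?case .
qed auto

lemma dyck_word_Suc:
  "dyck_word (Suc m) \<alpha> = dyck_word m \<alpha> @ replicate (\<alpha> m - \<alpha> (Suc m)) E @ [S]"
  by (simp add: dyck_word_def)

lemma foldl_move_dyck_word:
  assumes "\<forall>i\<in>{1..m}. \<alpha> i \<le> \<alpha> (i - 1)"
  shows "foldl move (a, b) (dyck_word m \<alpha>) = (a + int (\<alpha> 0) - int (\<alpha> m), b - int m)"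
  using assms
proof (induction m)
  case (Suc m)
  then have "\<alpha> (Suc m) \<le> \<alpha> m"
    by force
  with Suc show ?case
    by (simp add: dyck_word_Suc foldl_move_replicate_E of_nat_diff)
qed (simp add: dyck_word_def)

lemma set_path_points_dyck_word:
  assumes "\<forall>i\<in>{1..m}. \<alpha> i \<le> \<alpha> (i - 1)"
  shows "set (path_points (a, b) (dyck_word m \<alpha>)) = insert (a, b) (\<Union>i\<in>{1..m}.
           {(X, b - int i + 1) | X. a + int (\<alpha> 0) - int (\<alpha> (i - 1)) \<le> X \<and> X \<le> a + int (\<alpha> 0) - int (\<alpha> i)}
           \<union> {(a + int (\<alpha> 0) - int (\<alpha> i), b - int i)})"
  using assms
proof (induction m)
  case 0
  then show ?case by (simp add: dyck_word_def)
next
  case (Suc m)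
  have le: "\<alpha> (Suc m) \<le> \<alpha> m"
    using Suc.prems by force
  have "set (path_points (a, b) (dyck_word (Suc m) \<alpha>))
          = set (path_points (a, b) (dyck_word m \<alpha>))
            \<union> {(X, b - int m) | X. a + int (\<alpha> 0) - int (\<alpha> m) \<le> X \<and> X \<le> a + int (\<alpha> 0) - int (\<alpha> (Suc m))}
            \<union> {(a + int (\<alpha> 0) - int (\<alpha> (Suc m)), b - int (Suc m))}"
    using Suc.prems le
    by (auto simp: dyck_word_Suc set_path_points_append foldl_move_dyck_word
        foldl_move_replicate_E set_path_points_replicate_E of_nat_diff)
  then show ?case
    using Suc by (auto simp: atLeastAtMostSuc_conv)
qed

text \<open>On the row at height \<open>n - k\<close> the path occupies the columns from \<open>n - \<alpha>_k\<close> to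
  \<open>n - \<alpha>_(k+1)\<close>, so it meets \<open>(k, n - k)\<close> iff \<open>n - \<alpha>_k \<le> k\<close>; the bound on \<open>\<alpha>_k\<close> makes
  this an equality.\<close>
lemma prime_components_dyck_word:
  assumes zero: "\<alpha> 0 = n" and mono: "\<forall>i\<in>{1..n}. \<alpha> i \<le> \<alpha> (i - 1)"
    and bound: "\<forall>i\<in>{1..n}. \<alpha> i \<le> n - i"
  shows "prime_components n (dyck_word n \<alpha>) = card {k\<in>{1..n}. \<alpha> k = n - k}"
proof -
  have "(int k, int n - int k) \<in> set (path_points (0, int n) (dyck_word n \<alpha>)) \<longleftrightarrow> \<alpha> k = n - k"
    if k: "k \<in> {1..n}" for k
  proof
    assume "(int k, int n - int k) \<in> set (path_points (0, int n) (dyck_word n \<alpha>))"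
    then consider (row) i where "i \<in> {1..n}" "int n - int k = int n - int i + 1"
        "int n - int (\<alpha> (i - 1)) \<le> int k"
      | (corner) i where "int k = int n - int (\<alpha> i)" "int n - int k = int n - int i"
      using k zero unfolding set_path_points_dyck_word[OF mono] by auto
    then show "\<alpha> k = n - k"
    proof cases
      case (row i)
      then have "i - 1 = k"
        by linarith
      then show ?thesis
        using row(3) bound k by force
    next
      case (corner i)
      then show ?thesis
        by simp
    qed
  next
    assume "\<alpha> k = n - k"
    then show "(int k, int n - int k) \<in> set (path_points (0, int n) (dyck_word n \<alpha>))"
      using k zero unfolding set_path_points_dyck_word[OF mono] by (auto intro!: bexI[of _ k] simp: of_nat_diff)
  qed
  then show ?thesis
    unfolding prime_components_def by (metis (mono_tags, lifting) mem_Collect_eq)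
qed

section \<open>Level of a set\<close>

lemma level_eqI:
  assumes "subspace W" "dim W = l" "r > 0" "X \<subseteq> {x. infdist x W \<le> r}"
    and "\<And>W r. subspace W \<Longrightarrow> r > 0 \<Longrightarrow> X \<subseteq> {x. infdist x W \<le> r} \<Longrightarrow> l \<le> dim W"
  shows "level X = l"
  unfolding level_def using assms by (intro Least_equality) blast+

text \<open>Shrinking by \<open>1/t\<close> a point of \<open>W\<close> closest to \<open>x + t v\<close> gives points of \<open>W\<close> tending to \<open>v\<close>.\<close>
lemma mem_subspace_if_ray_near:
  fixes W :: "'a::euclidean_space set"
  assumes W: "subspace W" and near: "\<And>t. t \<ge> 0 \<Longrightarrow> infdist (x + t *\<^sub>R v) W \<le> r"
  shows "v \<in> W"
proof -
  have r: "r \<ge> 0"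
    using near[of 0] infdist_nonneg[of x W] by simp
  have "v \<in> closure W"
    unfolding closure_approachable
  proof (intro allI impI)
    fix e :: real
    assume e: "e > 0"
    define t where "t = (r + norm x + 1) / e"
    have t: "t > 0"
      unfolding t_def using e r norm_ge_zero[of x] by (intro divide_pos_pos) linarith+
    obtain w where w: "w \<in> W" "dist (x + t *\<^sub>R v) w \<le> r"
      using infdist_attains_inf[OF closed_subspace[OF W], of "x + t *\<^sub>R v"] subspace_0[OF W]
        near[of t] t by force
    have "(1 / t) *\<^sub>R w - v = (1 / t) *\<^sub>R (w - (x + t *\<^sub>R v) + x)"
      using t by (simp add: algebra_simps)
    then have "dist ((1 / t) *\<^sub>R w) v = norm (w - (x + t *\<^sub>R v) + x) / t"
      using t by (simp add: dist_norm)
    also have "\<dots> \<le> (r + norm x) / t"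
      using w(2) t norm_triangle_ineq[of "w - (x + t *\<^sub>R v)" x]
      by (intro divide_right_mono) (auto simp: dist_norm norm_minus_commute)
    also have "\<dots> < e"
      using e t r by (simp add: t_def field_simps)
    finally show "\<exists>y\<in>W. dist y v < e"
      using W w(1) by (meson subspace_scale)
  qed
  then show ?thesis
    using closed_subspace[OF W] by simp
qed

lemma card_le_dim_if_rays_near:
  fixes W :: "'a::euclidean_space set"
  assumes "subspace W" "independent V"
    and "\<And>v t. v \<in> V \<Longrightarrow> t \<ge> 0 \<Longrightarrow> infdist (x + t *\<^sub>R v) W \<le> r"
  shows "card V \<le> dim W"
  using assms mem_subspace_if_ray_near[OF assms(1)] independent_card_le_dim[of V W] by blast

section \<open>Regions of the arrangement\<close>

lemma region_avoids_hyperplanes: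
  assumes "\<Omega> \<in> regions_CA A" "y \<in> \<Omega>" "i \<noteq> j" "a \<in> A"
  shows "y$i - y$j \<noteq> a"
  using assms in_components_subset[of \<Omega>]
  unfolding regions_CA_def hyperplanes_CA_def by blast

lemma region_same_side:
  fixes x y :: "real^'n"
  assumes \<Omega>: "\<Omega> \<in> regions_CA A" and "x \<in> \<Omega>" "y \<in> \<Omega>" "i \<noteq> j" "a \<in> A"
    and "x$i - x$j < a"
  shows "y$i - y$j < a"
proof (rule ccontr)
  let ?h = "axis i 1 - axis j 1 :: real^'n"
  have h: "inner ?h z = z$i - z$j" for z
    by (simp add: inner_diff_left inner_commute[of "axis _ _"] cart_eq_inner_axis[symmetric])
  assume "\<not> y$i - y$j < a"
  then obtain z where "z \<in> \<Omega>" "inner ?h z = a"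
    using connected_ivt_hyperplane[of \<Omega> x y ?h a] assms
      in_components_connected[of \<Omega>] by (force simp: regions_CA_def h)
  then show False
    using region_avoids_hyperplanes[OF \<Omega>] assms h by metis
qed

definition coord_indicator :: "'a::finite set \<Rightarrow> real^'a" where
  "coord_indicator B = (\<chi> i. if i \<in> B then 1 else 0)"

lemma norm_coord_indicator_le: "norm (coord_indicator B :: real^'a) \<le> CARD('a)"
proof -
  have "norm (coord_indicator B :: real^'a) \<le> (\<Sum>i\<in>UNIV. \<bar>coord_indicator B $ i\<bar>)"
    by (rule norm_le_l1_cart)
  also have "\<dots> \<le> (\<Sum>i\<in>(UNIV::'a set). 1)"
    by (intro sum_mono) (simp add: coord_indicator_def)
  finally show ?thesis
    by simp
qed

text \<open>Raising a block of coordinates that exceeds all others by more than \<open>max A\<close> only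
  increases differences that already exceed every \<open>a \<in> A\<close> and decreases differences that are
  already negative.\<close>
lemma ray_in_region:
  fixes x :: "real^'n"
  assumes A: "finite A" "\<forall>a\<in>A. a > 0" and \<Omega>: "\<Omega> \<in> regions_CA A" and x: "x \<in> \<Omega>"
    and gap: "\<And>i j. i \<in> B \<Longrightarrow> j \<notin> B \<Longrightarrow> x$i - x$j > Max A" and t: "t \<ge> 0"
  shows "x + t *\<^sub>R coord_indicator B \<in> \<Omega>"
proof -
  define T where "T = (\<lambda>s. x + s *\<^sub>R coord_indicator B) ` {0..t}"
  have "connected T"
    unfolding T_def by (intro connected_continuous_image continuous_intros connected_Icc)
  moreover have "x \<in> T"
    unfolding T_def using t by force
  moreover have "T \<subseteq> UNIV - \<Union>(hyperplanes_CA A)"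
  proof
    fix z
    assume "z \<in> T"
    then obtain s where s: "0 \<le> s" and z: "z = x + s *\<^sub>R coord_indicator B"
      unfolding T_def by auto
    have "z$i - z$j \<notin> A" if ij: "i \<noteq> j" for i j
    proof -
      have "x$i - x$j \<notin> A"
        using region_avoids_hyperplanes[OF \<Omega> x ij] by blast
      moreover have "Max A < z$i - z$j" if "i \<in> B" "j \<notin> B"
        using gap[OF that] s that by (simp add: z coord_indicator_def)
      moreover have "z$i - z$j < - Max A" if "i \<notin> B" "j \<in> B"
        using gap[OF that(2,1)] s that by (simp add: z coord_indicator_def)
      ultimately show ?thesis
        using A Max_ge[OF A(1)]
        by (cases "i \<in> B"; cases "j \<in> B") (fastforce simp: z coord_indicator_def)+
    qed
    then show "z \<in> UNIV - \<Union>(hyperplanes_CA A)"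
      unfolding hyperplanes_CA_def by auto
  qed
  ultimately have "T \<subseteq> \<Omega>"
    using components_maximal[of \<Omega> "UNIV - \<Union>(hyperplanes_CA A)" T] \<Omega> x
    unfolding regions_CA_def by blast
  then show ?thesis
    using t unfolding T_def by (auto simp: image_subset_iff)
qed

section \<open>Sorted coordinates\<close>

locale assoc_perm =
  fixes x :: "real^'n::{finite,linorder}" and \<pi> :: "nat \<Rightarrow> 'n"
  assumes assoc_perm: "is_assoc_perm x \<pi>"
begin

lemma bij_betw_perm: "bij_betw \<pi> {1..CARD('n)} UNIV"
  using assoc_perm by (simp add: is_assoc_perm_def)

lemma perm_surj: obtains k where "k \<in> {1..CARD('n)}" "i = \<pi> k"
  using bij_betw_perm by (metis UNIV_I bij_betw_iff_bijections)

lemma perm_inj: "k \<in> {1..CARD('n)} \<Longrightarrow> l \<in> {1..CARD('n)} \<Longrightarrow> \<pi> k = \<pi> l \<longleftrightarrow> k = l"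
  using bij_betw_perm unfolding bij_betw_def inj_on_def by blast

lemma perm_sorted: "k \<in> {1..CARD('n)} \<Longrightarrow> l \<in> {1..CARD('n)} \<Longrightarrow> k \<le> l \<Longrightarrow> x$(\<pi> l) \<le> x$(\<pi> k)"
  using assoc_perm unfolding is_assoc_perm_def by blast

definition top_indicator :: "nat \<Rightarrow> real^('n::{finite,linorder})" where
  "top_indicator b = coord_indicator (\<pi> ` {1..b})"

lemma top_indicator_nth:
  assumes "k \<in> {1..CARD('n)}" "b \<le> CARD('n)"
  shows "top_indicator b $ \<pi> k = (if k \<le> b then 1 else 0)"
  using assms perm_inj by (auto simp: top_indicator_def coord_indicator_def)

lemma inj_on_top_indicator: "inj_on top_indicator {1..CARD('n)}"
proof (rule linorder_inj_onI')
  fix b c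
  assume "b \<in> {1..CARD('n)}" "c \<in> {1..CARD('n)}" "b < c"
  then have "top_indicator b $ \<pi> c \<noteq> top_indicator c $ \<pi> c"
    by (simp add: top_indicator_nth)
  then show "top_indicator b \<noteq> top_indicator c"
    by metis
qed

lemma card_image_top_indicator:
  "B \<subseteq> {1..CARD('n)} \<Longrightarrow> card (top_indicator ` B) = card B"
  using card_image inj_on_subset[OF inj_on_top_indicator] by blast

text \<open>Each \<open>top_indicator b\<close> has a coordinate, \<open>\<pi> b\<close>, on which all earlier ones vanish.\<close>
lemma independent_top_indicator:
  assumes "B \<subseteq> {1..CARD('n)}"
  shows "independent (top_indicator ` B)"
proof -
  have "finite B"
    using assms finite_subset by blast
  then show ?thesis
    using assms
  proof (induction B rule: finite_linorder_max_induct)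
    case (insert b B)
    have b: "b \<in> {1..CARD('n)}"
      using insert.prems by simp
    have "top_indicator ` B \<subseteq> {v. v $ \<pi> b = 0}"
      using insert b by (auto simp: top_indicator_nth)
    then have "span (top_indicator ` B) \<subseteq> {v. v $ \<pi> b = 0}"
      by (rule span_minimal) (auto simp: subspace_def)
    moreover have "top_indicator b $ \<pi> b = 1"
      using b by (simp add: top_indicator_nth)
    ultimately have "top_indicator b \<notin> span (top_indicator ` B)"
      by auto
    then show ?case
      using insert by (simp add: independent_insertI)
  qed (simp add: independent_empty)
qed

definition coord_gap :: "real^('n::{finite,linorder}) \<Rightarrow> nat \<Rightarrow> real" where
  "coord_gap y b = (if b < CARD('n) then y$(\<pi> b) - y$(\<pi> (Suc b)) else y$(\<pi> b))"

lemma sum_coord_gap_top_indicator: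
  "(\<Sum>b = 1..CARD('n). coord_gap y b *\<^sub>R top_indicator b) = y"
  unfolding vec_eq_iff
proof
  fix i
  obtain k where k: "k \<in> {1..CARD('n)}" and i: "i = \<pi> k"
    using perm_surj .
  define f where "f b = (if b \<le> CARD('n) then y$(\<pi> b) else 0)" for b
  have "(\<Sum>b = 1..CARD('n). coord_gap y b *\<^sub>R top_indicator b) $ \<pi> k
          = (\<Sum>b = 1..CARD('n). if k \<le> b then coord_gap y b else 0)"
    using k by (auto simp: top_indicator_nth intro: sum.cong)
  also have "\<dots> = (\<Sum>b = k..CARD('n). coord_gap y b)"
    using k by (intro sum.mono_neutral_cong_right) auto
  also have "\<dots> = (\<Sum>b = k..<Suc CARD('n). f b - f (Suc b))"
    unfolding atLeastLessThanSuc_atLeastAtMost by (intro sum.cong) (auto simp: f_def coord_gap_def)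
  also have "\<dots> = - (\<Sum>b = k..<Suc CARD('n). f (Suc b) - f b)"
    by (simp add: sum_negf[symmetric])
  also have "\<dots> = y $ \<pi> k"
    using k by (subst sum_Suc_diff') (auto simp: f_def)
  finally show "(\<Sum>b = 1..CARD('n). coord_gap y b *\<^sub>R top_indicator b) $ i = y $ i"
    using i by simp
qed

end

section \<open>The region containing a point\<close>

locale region_point = assoc_perm x \<pi>
  for x :: "real^'n::{finite,linorder}" and \<pi> :: "nat \<Rightarrow> 'n" +
  fixes A :: "real set" and \<Omega> :: "(real^('n::{finite,linorder})) set"
  assumes finite_A: "finite A" and A_nonempty: "A \<noteq> {}" and A_pos: "\<forall>a\<in>A. a > 0"
    and region: "\<Omega> \<in> regions_CA A" and mem_region: "x \<in> \<Omega>"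
begin

lemma Max_A: "Max A \<in> A" "Max A > 0"
  using finite_A A_nonempty A_pos by auto

definition gap_positions :: "nat set" where
  "gap_positions = {b \<in> {1..CARD('n)}. b = CARD('n) \<or> x$(\<pi> b) - x$(\<pi> (Suc b)) > Max A}"

lemma gap_positions_subset: "gap_positions \<subseteq> {1..CARD('n)}"
  by (auto simp: gap_positions_def)

lemma ray_top_indicator:
  assumes b: "b \<in> gap_positions" and t: "t \<ge> 0"
  shows "x + t *\<^sub>R top_indicator b \<in> \<Omega>"
  unfolding top_indicator_def
proof (rule ray_in_region[OF finite_A A_pos region mem_region _ t])
  fix i j
  assume "i \<in> \<pi> ` {1..b}" "j \<notin> \<pi> ` {1..b}"
  moreover obtain l where "l \<in> {1..CARD('n)}" "j = \<pi> l"
    using perm_surj .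
  ultimately obtain k where k: "k \<in> {1..b}" "i = \<pi> k" and l: "l \<in> {Suc b..CARD('n)}" "j = \<pi> l"
    by force
  then have "b < CARD('n)" "x$(\<pi> b) - x$(\<pi> (Suc b)) > Max A"
    using b by (auto simp: gap_positions_def)
  moreover have "x$(\<pi> b) \<le> x$i" "x$j \<le> x$(\<pi> (Suc b))"
    using b k l gap_positions_subset by (auto intro!: perm_sorted)
  ultimately show "x$i - x$j > Max A"
    by linarith
qed

text \<open>The bound holds at \<open>x\<close> and is transferred to \<open>y\<close> by \<open>region_same_side\<close>.\<close>
lemma coord_gap_small:
  assumes y: "y \<in> \<Omega>" and b: "b \<in> {1..CARD('n)}" "b \<notin> gap_positions"
  shows "\<bar>coord_gap y b\<bar> < Max A"
proof -
  have lt: "b < CARD('n)" and not_gap: "\<not> x$(\<pi> b) - x$(\<pi> (Suc b)) > Max A"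
    using b by (auto simp: gap_positions_def)
  then have ne: "\<pi> b \<noteq> \<pi> (Suc b)"
    using b perm_inj[of b "Suc b"] by auto
  have "x$(\<pi> b) - x$(\<pi> (Suc b)) < Max A"
    using not_gap region_avoids_hyperplanes[OF region mem_region ne Max_A(1)] by linarith
  then have "y$(\<pi> b) - y$(\<pi> (Suc b)) < Max A"
    using region_same_side[OF region mem_region y ne Max_A(1)] by blast
  moreover have "x$(\<pi> (Suc b)) - x$(\<pi> b) < Max A"
    using perm_sorted[of b "Suc b"] b lt Max_A(2) by auto
  then have "y$(\<pi> (Suc b)) - y$(\<pi> b) < Max A"
    using region_same_side[OF region mem_region y ne[symmetric] Max_A(1)] by blast
  ultimately show ?thesis
    using lt by (simp add: coord_gap_def abs_less_iff)
qed

lemma infdist_span_top_indicator_le: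
  assumes y: "y \<in> \<Omega>"
  shows "infdist y (span (top_indicator ` gap_positions)) \<le> CARD('n) * (CARD('n) * Max A)"
proof -
  define w where "w = (\<Sum>b\<in>gap_positions. coord_gap y b *\<^sub>R top_indicator b)"
  have "w \<in> span (top_indicator ` gap_positions)"
    unfolding w_def by (intro span_sum span_scale span_base) auto
  then have "infdist y (span (top_indicator ` gap_positions)) \<le> norm (y - w)"
    using infdist_le by (metis dist_norm)
  also have "y - w = (\<Sum>b\<in>{1..CARD('n)} - gap_positions. coord_gap y b *\<^sub>R top_indicator b)"
    using sum_coord_gap_top_indicator[of y] gap_positions_subset
    by (simp add: w_def sum_diff)
  also have "norm \<dots> \<le> (\<Sum>b\<in>{1..CARD('n)} - gap_positions. norm (coord_gap y b *\<^sub>R top_indicator b))"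
    by (rule norm_sum)
  also have "\<dots> \<le> (\<Sum>b\<in>{1..CARD('n)} - gap_positions. Max A * CARD('n))"
  proof (rule sum_mono)
    fix b
    assume "b \<in> {1..CARD('n)} - gap_positions"
    then show "norm (coord_gap y b *\<^sub>R top_indicator b) \<le> Max A * CARD('n)"
      using coord_gap_small[OF y, of b] norm_coord_indicator_le[of "\<pi> ` {1..b}"] Max_A(2)
      by (auto simp: top_indicator_def intro!: mult_mono)
  qed
  also have "\<dots> \<le> CARD('n) * (CARD('n) * Max A)"
    using card_mono[of "{1..CARD('n)}" "{1..CARD('n)} - gap_positions"] Max_A(2)
    by (auto intro!: mult_right_mono)
  finally show ?thesis .
qed

lemma level_region: "level \<Omega> = card gap_positions"
proof (rule level_eqI)
  show "subspace (span (top_indicator ` gap_positions))"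
    by (rule subspace_span)
  show "dim (span (top_indicator ` gap_positions)) = card gap_positions"
    using independent_top_indicator[OF gap_positions_subset]
      card_image_top_indicator[OF gap_positions_subset]
    by (simp add: dim_eq_card_independent)
  show "\<Omega> \<subseteq> {y. infdist y (span (top_indicator ` gap_positions)) \<le> CARD('n) * (CARD('n) * Max A) + 1}"
    using infdist_span_top_indicator_le by force
  show "CARD('n) * (CARD('n) * Max A) + 1 > 0"
    using Max_A(2) by (simp add: add_nonneg_pos)
next
  fix W r
  assume W: "subspace W" and cover: "\<Omega> \<subseteq> {y. infdist y W \<le> r}"
  have "card (top_indicator ` gap_positions) \<le> dim W"
    using ray_top_indicator cover
    by (intro card_le_dim_if_rays_near[OF W independent_top_indicator[OF gap_positions_subset]]) blast
  then show "card gap_positions \<le> dim W"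
    using card_image_top_indicator[OF gap_positions_subset] by simp
qed

lemma far_below_subset:
  assumes "k \<in> {1..CARD('n)}"
  shows "{j \<in> {1..CARD('n)}. x$(\<pi> k) - x$(\<pi> j) > Max A} \<subseteq> {Suc k..CARD('n)}"
proof (intro subsetI)
  fix j
  assume j: "j \<in> {j \<in> {1..CARD('n)}. x$(\<pi> k) - x$(\<pi> j) > Max A}"
  have "\<not> j \<le> k"
    using j assms perm_sorted[of j k] Max_A(2) by auto
  then show "j \<in> {Suc k..CARD('n)}"
    using j by simp
qed

lemma alpha_le: "k \<in> {1..CARD('n)} \<Longrightarrow> alpha A x \<pi> k \<le> CARD('n) - k"
  using card_mono[OF _ far_below_subset] by (simp add: alpha_def)

lemma alpha_antimono:
  assumes k: "k \<in> {1..CARD('n)}"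
  shows "alpha A x \<pi> k \<le> alpha A x \<pi> (k - 1)"
proof (cases "k = 1")
  case True
  then show ?thesis
    using alpha_le[OF k] by (simp add: alpha_def[where i = 0])
next
  case False
  then have "{j \<in> {1..CARD('n)}. x$(\<pi> k) - x$(\<pi> j) > Max A}
               \<subseteq> {j \<in> {1..CARD('n)}. x$(\<pi> (k - 1)) - x$(\<pi> j) > Max A}"
    using k perm_sorted[of "k - 1" k] by force
  then show ?thesis
    using k False by (simp add: alpha_def card_mono)
qed

text \<open>\<open>\<alpha>\<^sub>k = n - k\<close> says that \<open>x\<^sub>\<pi>\<^sub>(\<^sub>k\<^sub>)\<close> exceeds every later sorted coordinate by more than
  \<open>max A\<close>, which by sortedness only needs to be checked for the next one.\<close>
lemma alpha_eq_iff_gap_position: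
  assumes k: "k \<in> {1..CARD('n)}"
  shows "alpha A x \<pi> k = CARD('n) - k \<longleftrightarrow> k \<in> gap_positions"
proof -
  let ?above = "{j \<in> {1..CARD('n)}. x$(\<pi> k) - x$(\<pi> j) > Max A}"
  have alpha_k: "alpha A x \<pi> k = card ?above"
    using k by (simp add: alpha_def)
  have "alpha A x \<pi> k = CARD('n) - k \<longleftrightarrow> ?above = {Suc k..CARD('n)}"
  proof
    assume "alpha A x \<pi> k = CARD('n) - k"
    then have "card ?above = card {Suc k..CARD('n)}"
      using alpha_k by simp
    then show "?above = {Suc k..CARD('n)}"
      by (rule card_subset_eq[OF finite_atLeastAtMost far_below_subset[OF k]])
  qed (simp add: alpha_k)
  also have "\<dots> \<longleftrightarrow> k = CARD('n) \<or> x$(\<pi> k) - x$(\<pi> (Suc k)) > Max A"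
  proof
    assume above: "?above = {Suc k..CARD('n)}"
    show "k = CARD('n) \<or> x$(\<pi> k) - x$(\<pi> (Suc k)) > Max A"
    proof (cases "k = CARD('n)")
      case False
      then have "Suc k \<in> ?above"
        unfolding above using k by simp
      then show ?thesis
        by simp
    qed simp
  next
    assume gap: "k = CARD('n) \<or> x$(\<pi> k) - x$(\<pi> (Suc k)) > Max A"
    have "j \<in> ?above" if j: "j \<in> {Suc k..CARD('n)}" for j
    proof -
      have "x$(\<pi> j) \<le> x$(\<pi> (Suc k))"
        using j k by (intro perm_sorted) auto
      then show ?thesis
        using gap j by auto
    qed
    then show "?above = {Suc k..CARD('n)}"
      using far_below_subset[OF k] by blast
  qed
  finally show ?thesis
    using k by (simp add: gap_positions_def)
qed

end

theorem theorem3p5: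
  fixes A :: "real set" and \<Omega> :: "(real, 'n::{finite,linorder}) vec set"
    and x :: "(real, 'n) vec" and \<pi> :: "nat \<Rightarrow> 'n"
  assumes "finite A" and "A \<noteq> {}" and "\<forall>a\<in>A. a > 0"
    and "\<Omega> \<in> regions_CA A"
    and "x \<in> \<Omega>"
    and "is_assoc_perm x \<pi>"
  shows "level \<Omega> = prime_components CARD('n) (D1 A x \<pi>)"
proof -
  interpret region_point x \<pi> A \<Omega>
    using assms by unfold_locales
  have "prime_components CARD('n) (D1 A x \<pi>)
          = card {k \<in> {1..CARD('n)}. alpha A x \<pi> k = CARD('n) - k}"
    unfolding D1_def
    using alpha_le alpha_antimono
    by (intro prime_components_dyck_word) (simp_all add: alpha_def[where i = 0])
  also have "{k \<in> {1..CARD('n)}. alpha A x \<pi> k = CARD('n) - k} = gap_positions"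
    using alpha_eq_iff_gap_position gap_positions_subset by blast
  finally show ?thesis
    using level_region by simp
qed

end
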